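(* Consider the distributed quantized weight-balancing algorithm described in the context on a strongly connected digraph with $N$ nodes, with step-size $\gamma(k)=2^{-n}$ for $2^n-1\le k\le 2^{n+1}-2$. For every $k\in\mathbb{Z}_+$ there exists $k_1\ge k$ such that $\Vert\boldsymbol{\epsilon}(k_1)\Vert_1<2N(N-1)\gamma(k_1)$.
   Context: $\mathcal{G}=(\mathcal{V},\mathcal{E})$, $\mathcal{V}=\{1,\dots,N\}$, no self-loops; $\mathcal{N}_i^-=\{j:(j,i)\in\mathcal{E}\}$, $\mathcal{N}_i^+=\{j:(i,j)\in\mathcal{E}\}$, $d_i^+=|\mathcal{N}_i^+|$. Algorithm: $a_{ij}(0)=1$ if $j\in\mathcal{N}_i^-$ and $0$ otherwise; $b_i(k)=\sum_{j\in\mathcal{N}_i^-}a_{ij}(k)-\sum_{j\in\mathcal{N}_i^+}a_{ji}(k)$; $n_i(k)=1$ if $b_i(k)\ge d_i^+\gamma(k)$, else $0$; $a_{ij}(k+1)=a_{ij}(k)+n_j(k)\gamma(k)$ for $j\in\mathcal{N}_i^-$. $\boldsymbol{\epsilon}(k)=(|b_i(k)|)_{i=1}^N$. *)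

theory Defs
  imports Complex_Main
begin

text \<open>Digraph on vertices {1..N}: an edge (j,i) goes from j to i.\<close>

definition in_nbrs :: "(nat \<times> nat) set \<Rightarrow> nat \<Rightarrow> nat set" where
  "in_nbrs E i = {j. (j, i) \<in> E}"

definition out_nbrs :: "(nat \<times> nat) set \<Rightarrow> nat \<Rightarrow> nat set" where
  "out_nbrs E i = {j. (i, j) \<in> E}"

definition out_deg :: "(nat \<times> nat) set \<Rightarrow> nat \<Rightarrow> nat" where
  "out_deg E i = card (out_nbrs E i)"

definition gamma :: "nat \<Rightarrow> real" where
  "gamma k = 1 / 2 ^ (THE n. 2 ^ n - 1 \<le> k \<and> k \<le> 2 ^ (n + 1) - 2)"

text \<open>Weight imbalance b_i for a weight assignment a (a i j = weight of edge (j,i)).\<close>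
definition bal :: "(nat \<times> nat) set \<Rightarrow> (nat \<Rightarrow> nat \<Rightarrow> real) \<Rightarrow> nat \<Rightarrow> real" where
  "bal E a i = (\<Sum>j\<in>in_nbrs E i. a i j) - (\<Sum>j\<in>out_nbrs E i. a j i)"

primrec wts :: "(nat \<times> nat) set \<Rightarrow> nat \<Rightarrow> nat \<Rightarrow> nat \<Rightarrow> real" where
  "wts E 0 = (\<lambda>i j. if (j, i) \<in> E then 1 else 0)"
| "wts E (Suc k) =
     (\<lambda>i j. if (j, i) \<in> E
            then wts E k i j
                 + (if bal E (wts E k) j \<ge> real (out_deg E j) * gamma k then gamma k else 0)
            else wts E k i j)"

definition flag :: "(nat \<times> nat) set \<Rightarrow> nat \<Rightarrow> nat \<Rightarrow> nat" where
  "flag E k i = (if bal E (wts E k) i \<ge> real (out_deg E i) * gamma k then 1 else 0)"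

definition b :: "(nat \<times> nat) set \<Rightarrow> nat \<Rightarrow> nat \<Rightarrow> real" where
  "b E k i = bal E (wts E k) i"

definition eps_norm1 :: "nat \<Rightarrow> (nat \<times> nat) set \<Rightarrow> nat \<Rightarrow> real" where
  "eps_norm1 N E k = (\<Sum>i\<in>{1..N}. \<bar>b E k i\<bar>)"

definition strongly_connected :: "nat \<Rightarrow> (nat \<times> nat) set \<Rightarrow> bool" where
  "strongly_connected N E \<longleftrightarrow> (\<forall>i\<in>{1..N}. \<forall>j\<in>{1..N}. (i, j) \<in> E\<^sup>*)"

end

theory Submission
  imports Defs "HOL-Library.Discrete_Functions"
begin

(* Call the total negative imbalance the deficit; as the imbalances sum to zero, it is half
   the 1-norm of the error. A node fires only if its imbalance stays nonnegative, so the deficit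
   never increases, and since all imbalances at time k are multiples of gamma(k), it drops by
   gamma(k) whenever a node with negative imbalance receives weight. While the error is at least
   2N(N-1)gamma(k), some node fires and some node is negative. On a window of constant step size
   in which no negative node receives weight, the negative nodes are frozen, and a node at
   distance n from one of them fires fewer than (N+1)^n times: each of its firings raises its
   out-neighbour, which absorbs at most out_deg+1 raises between two firings of its own. So such
   windows are shorter than some M, a block of constant step size 2^-n (of length 2^n) contains
   2^(n-m) disjoint windows of length 2^m > M, and the deficit falls by 2^-m per block,
   contradicting its nonnegativity. *)

lemma gamma_eq_floor_log: "gamma k = 1 / 2 ^ floor_log (Suc k)"
proof -
  have "2 ^ n - 1 \<le> k \<and> k \<le> 2 ^ (n + 1) - 2 \<longleftrightarrow> n = floor_log (Suc k)" for n
  proof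
    assume "2 ^ n - 1 \<le> k \<and> k \<le> 2 ^ (n + 1) - 2"
    moreover have "0 < (2::nat) ^ n" "(2::nat) ^ (n + 1) = 2 * 2 ^ n" by simp_all
    ultimately have "2 ^ n \<le> Suc k" "Suc k < 2 * 2 ^ n" by linarith+
    then show "n = floor_log (Suc k)" by (simp add: floor_log_eqI)
  next
    assume n: "n = floor_log (Suc k)"
    show "2 ^ n - 1 \<le> k \<and> k \<le> 2 ^ (n + 1) - 2"
      using floor_log_exp2_le[of "Suc k"] floor_log_exp2_gt[of "Suc k"] unfolding n by auto
  qed
  then show ?thesis unfolding gamma_def by simp
qed

lemma gamma_pos: "0 < gamma k"
  by (simp add: gamma_eq_floor_log)

lemma gamma_eqI: "2 ^ n \<le> Suc k \<Longrightarrow> Suc k < 2 ^ Suc n \<Longrightarrow> gamma k = 1 / 2 ^ n"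
  using floor_log_eqI[of "Suc k" n] by (simp add: gamma_eq_floor_log)

lemma Ints_mult_power2_mono:
  "x * 2 ^ m \<in> \<int> \<Longrightarrow> m \<le> n \<Longrightarrow> x * (2::'a::ring_1) ^ n \<in> \<int>"
  using Ints_mult[of "x * 2 ^ m" "2 ^ (n - m)"] by (simp add: mult.assoc flip: power_add)

lemma wts_dyadic: "wts E k i j * 2 ^ floor_log (Suc k) \<in> \<int>"
proof (induction k arbitrary: i j)
  case 0
  show ?case by simp
next
  case (Suc k)
  have mono: "floor_log (Suc k) \<le> floor_log (Suc (Suc k))"
    by (simp add: floor_log_le_iff)
  have "gamma k * 2 ^ floor_log (Suc (Suc k)) \<in> \<int>"
    by (rule Ints_mult_power2_mono[OF _ mono]) (simp add: gamma_eq_floor_log)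
  moreover have "wts E k i' j' * 2 ^ floor_log (Suc (Suc k)) \<in> \<int>" for i' j'
    using Ints_mult_power2_mono[OF Suc.IH mono] .
  ultimately show ?case
    by (simp add: distrib_right)
qed

lemma b_dyadic: "b E k i * 2 ^ floor_log (Suc k) \<in> \<int>"
  unfolding b_def bal_def left_diff_distrib sum_distrib_right
  by (intro Ints_diff Ints_sum wts_dyadic)

lemma b_le_neg_gamma: "b E k i < 0 \<Longrightarrow> b E k i \<le> - gamma k"
proof -
  assume neg: "b E k i < 0"
  obtain z where z: "b E k i * 2 ^ floor_log (Suc k) = of_int z"
    using b_dyadic Ints_cases by metis
  have "b E k i * 2 ^ floor_log (Suc k) < 0"
    using neg by (simp add: mult_neg_pos)
  then have "b E k i * 2 ^ floor_log (Suc k) \<le> -1"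
    unfolding z by simp
  then show ?thesis
    by (simp add: gamma_eq_floor_log field_simps)
qed

lemma sum_bal_eq_0:
  assumes "finite A" "E \<subseteq> A \<times> A"
  shows "(\<Sum>i\<in>A. bal E a i) = 0"
proof -
  have fin: "finite (in_nbrs E i)" "finite (out_nbrs E i)" for i
    using assms by (auto simp: in_nbrs_def out_nbrs_def intro: finite_subset[OF _ assms(1)])
  have "(\<Sum>i\<in>A. \<Sum>j\<in>in_nbrs E i. a i j) = (\<Sum>(i, j)\<in>Sigma A (in_nbrs E). a i j)"
    using assms(1) fin by (simp add: sum.Sigma)
  also have "\<dots> = (\<Sum>(j, i)\<in>E. a i j)"
  proof -
    have "Sigma A (in_nbrs E) = prod.swap ` E"
      using assms(2) by (auto simp: in_nbrs_def)
    then show ?thesis by (simp add: sum.reindex case_prod_unfold)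
  qed
  also have "\<dots> = (\<Sum>(i, j)\<in>Sigma A (out_nbrs E). a j i)"
  proof -
    have "Sigma A (out_nbrs E) = E"
      using assms(2) by (auto simp: out_nbrs_def)
    then show ?thesis by simp
  qed
  also have "\<dots> = (\<Sum>i\<in>A. \<Sum>j\<in>out_nbrs E i. a j i)"
    using assms(1) fin by (simp add: sum.Sigma)
  finally show ?thesis
    by (simp add: bal_def sum_subtractf)
qed

lemma card_filter_lessThan_Suc:
  "card {s \<in> {..<Suc t}. P s} = card {s \<in> {..<t}. P s} + (if P t then 1 else 0)"
proof -
  have "{s \<in> {..<Suc t}. P s} = (if P t then insert t {s \<in> {..<t}. P s} else {s \<in> {..<t}. P s})"
    by (auto simp: less_Suc_eq)
  then show ?thesis by simp
qed

lemma card_raises_le_card_releases: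
  fixes x :: "nat \<Rightarrow> real" and d g :: real
  assumes g: "0 < g" and d: "0 \<le> d" and x0: "0 \<le> x 0"
    and step: "\<And>t. t < T \<Longrightarrow>
      x t - (if d * g \<le> x t then d * g else 0) + (if P t then g else 0) \<le> x (Suc t)"
  shows "real (card {t \<in> {..<T}. P t}) + 1 \<le> (d + 2) * (real (card {t \<in> {..<T}. d * g \<le> x t}) + 1)"
proof -
  define raises where "raises t = real (card {s \<in> {..<t}. P s})" for t
  define releases where "releases t = real (card {s \<in> {..<t}. d * g \<le> x s})" for t
  define cap where "cap y = (if d * g \<le> y then (d + 1) * g else y)" for y
  \<comment> \<open>Each release pays for d + 2 raises; the unpaid ones are stored in x while x is below
    the threshold d g, and number at most d + 1 otherwise.\<close>
  have inv: "0 \<le> x t \<and> g * raises t \<le> (d + 2) * g * releases t + cap (x t)" if "t \<le> T" for t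
    using that
  proof (induction t)
    case 0
    then show ?case using x0 g d by (simp add: raises_def releases_def cap_def)
  next
    case (Suc t)
    then have IH: "0 \<le> x t" "g * raises t \<le> (d + 2) * g * releases t + cap (x t)"
      and st: "x t - (if d * g \<le> x t then d * g else 0) + (if P t then g else 0) \<le> x (Suc t)"
      using step by auto
    have raises_Suc: "g * raises (Suc t) = g * raises t + (if P t then g else 0)"
      unfolding raises_def card_filter_lessThan_Suc by (simp add: distrib_left)
    have releases_Suc: "releases (Suc t) = releases t + (if d * g \<le> x t then 1 else 0)"
      unfolding releases_def card_filter_lessThan_Suc by simp
    show ?case
    proof (cases "d * g \<le> x t")
      case True
      then have "0 \<le> x (Suc t)" "cap (x t) = (d + 1) * g"
        using st g by (auto simp: cap_def split: if_splits)
      moreover have "0 \<le> cap (x (Suc t))"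
        using \<open>0 \<le> x (Suc t)\<close> g d by (simp add: cap_def)
      ultimately show ?thesis
        using IH raises_Suc releases_Suc True g by (auto simp: algebra_simps split: if_splits)
    next
      case False
      then have "x t + (if P t then g else 0) \<le> x (Suc t)" "cap (x t) = x t"
        using st by (auto simp: cap_def)
      moreover have "x t + (if P t then g else 0) \<le> cap (x (Suc t))"
        using calculation False g by (auto simp: cap_def algebra_simps)
      ultimately show ?thesis
        using IH raises_Suc releases_Suc False g by (auto split: if_splits)
    qed
  qed
  have "cap (x T) \<le> (d + 1) * g"
    using g by (auto simp: cap_def algebra_simps)
  with inv[of T] have "g * raises T \<le> g * ((d + 2) * releases T + (d + 1))"
    by (simp add: algebra_simps)
  then have "raises T \<le> (d + 2) * releases T + (d + 1)"
    using g by simp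
  then show ?thesis
    by (simp add: raises_def releases_def algebra_simps)
qed

lemma finite_ex_le_bound:
  assumes "finite A" "\<forall>x\<in>A. \<exists>n::nat. P x n"
  shows "\<exists>m. \<forall>x\<in>A. \<exists>n\<le>m. P x n"
proof -
  obtain f where "\<forall>x\<in>A. P x (f x)" using bchoice[OF assms(2)] by blast
  moreover have "\<forall>x\<in>A. f x \<le> Max (f ` A)" using assms(1) by simp
  ultimately show ?thesis by blast
qed

lemma le_sum_card_filter:
  assumes "finite U" "\<forall>t<T. \<exists>u\<in>U. P t u"
  shows "T \<le> (\<Sum>u\<in>U. card {t \<in> {..<T}. P t u})"
proof -
  have "T = (\<Sum>t<T. 1::nat)" by simp
  also have "\<dots> \<le> (\<Sum>t<T. \<Sum>u\<in>U. if P t u then 1 else 0)"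
  proof (rule sum_mono)
    fix t assume "t \<in> {..<T}"
    then obtain u where "u \<in> U" "P t u" using assms(2) by blast
    then show "1 \<le> (\<Sum>u\<in>U. if P t u then 1 else 0::nat)"
      using member_le_sum[of u U "\<lambda>u. if P t u then 1 else 0::nat"] assms(1) by simp
  qed
  also have "\<dots> = (\<Sum>u\<in>U. \<Sum>t<T. if P t u then 1 else 0)"
    by (rule sum.swap)
  also have "\<dots> = (\<Sum>u\<in>U. card {t \<in> {..<T}. P t u})"
    by (simp add: sum.inter_filter[symmetric])
  finally show ?thesis .
qed

locale weight_balancing =
  fixes N :: nat and E :: "(nat \<times> nat) set"
  assumes two_le_N: "2 \<le> N"
    and E_subset: "E \<subseteq> {1..N} \<times> {1..N}"
    and no_loops: "\<forall>i. (i, i) \<notin> E"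
    and strongly_conn: "strongly_connected N E"
begin

definition fires :: "nat \<Rightarrow> nat \<Rightarrow> bool" where
  "fires k i \<longleftrightarrow> real (out_deg E i) * gamma k \<le> b E k i"

definition deficit :: "nat \<Rightarrow> real" where
  "deficit k = (\<Sum>i\<in>{1..N}. max (- b E k i) 0)"

definition unbalanced :: "nat \<Rightarrow> bool" where
  "unbalanced k \<longleftrightarrow> 2 * real N * (real N - 1) * gamma k \<le> eps_norm1 N E k"

definition feeds_deficient :: "nat \<Rightarrow> bool" where
  "feeds_deficient k \<longleftrightarrow> (\<exists>i\<in>{1..N}. b E k i < 0 \<and> (\<exists>j\<in>in_nbrs E i. fires k j))"

lemma finite_in_nbrs: "finite (in_nbrs E i)"
proof -
  have "in_nbrs E i \<subseteq> {1..N}" using E_subset by (auto simp: in_nbrs_def)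
  then show ?thesis by (rule finite_subset) simp
qed

lemma out_deg_le: "real (out_deg E i) \<le> real N - 1"
proof (cases "i \<in> {1..N}")
  case True
  have "out_nbrs E i \<subseteq> {1..N} - {i}"
    using E_subset no_loops by (auto simp: out_nbrs_def)
  then have "out_deg E i \<le> card ({1..N} - {i})"
    unfolding out_deg_def by (intro card_mono) auto
  moreover have "card ({1..N} - {i}) = N - 1" "1 \<le> N"
    using True by simp_all
  ultimately have "out_deg E i + 1 \<le> N" by linarith
  then show ?thesis by linarith
next
  case False
  then have "out_nbrs E i = {}" using E_subset by (auto simp: out_nbrs_def)
  then show ?thesis using two_le_N by (simp add: out_deg_def)
qed

lemma b_Suc:
  "b E (Suc k) i = b E k i - (if fires k i then real (out_deg E i) * gamma k else 0)
     + gamma k * real (card {j \<in> in_nbrs E i. fires k j})"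
proof -
  have "(\<Sum>j\<in>in_nbrs E i. wts E (Suc k) i j)
      = (\<Sum>j\<in>in_nbrs E i. wts E k i j + (if fires k j then gamma k else 0))"
    by (rule sum.cong) (auto simp: in_nbrs_def fires_def b_def)
  also have "\<dots> = (\<Sum>j\<in>in_nbrs E i. wts E k i j) + gamma k * real (card {j \<in> in_nbrs E i. fires k j})"
    by (simp add: sum.distrib sum.inter_filter[symmetric] finite_in_nbrs)
  finally have receive: "(\<Sum>j\<in>in_nbrs E i. wts E (Suc k) i j)
      = (\<Sum>j\<in>in_nbrs E i. wts E k i j) + gamma k * real (card {j \<in> in_nbrs E i. fires k j})" .
  have "(\<Sum>j\<in>out_nbrs E i. wts E (Suc k) j i)
      = (\<Sum>j\<in>out_nbrs E i. wts E k j i + (if fires k i then gamma k else 0))"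
    by (rule sum.cong) (auto simp: out_nbrs_def fires_def b_def)
  then have send: "(\<Sum>j\<in>out_nbrs E i. wts E (Suc k) j i)
      = (\<Sum>j\<in>out_nbrs E i. wts E k j i) + (if fires k i then real (out_deg E i) * gamma k else 0)"
    by (simp add: sum.distrib out_deg_def)
  show ?thesis
    unfolding b_def bal_def receive send by simp
qed

lemma b_Suc_ge: "b E k i - (if fires k i then real (out_deg E i) * gamma k else 0) \<le> b E (Suc k) i"
  using b_Suc[of k i] gamma_pos[of k] by simp

lemma not_fires_if_neg:
  assumes "b E k i < 0"
  shows "\<not> fires k i"
proof -
  have "0 \<le> real (out_deg E i) * gamma k"
    using gamma_pos[of k] by simp
  with assms show ?thesis by (simp add: fires_def)
qed

lemma sum_b_eq_0: "(\<Sum>i\<in>{1..N}. b E k i) = 0"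
  unfolding b_def using E_subset by (intro sum_bal_eq_0) simp_all

lemma eps_norm1_eq_deficit: "eps_norm1 N E k = 2 * deficit k"
proof -
  have "eps_norm1 N E k = (\<Sum>i\<in>{1..N}. b E k i + 2 * max (- b E k i) 0)"
    unfolding eps_norm1_def by (rule sum.cong) auto
  then show ?thesis
    unfolding sum.distrib sum_b_eq_0 deficit_def sum_distrib_left by simp
qed

lemma deficit_eq_sum_pos_part: "deficit k = (\<Sum>i\<in>{1..N}. max (b E k i) 0)"
proof -
  have "(\<Sum>i\<in>{1..N}. max (b E k i) 0) = (\<Sum>i\<in>{1..N}. b E k i + max (- b E k i) 0)"
    by (rule sum.cong) auto
  then show ?thesis
    unfolding sum.distrib sum_b_eq_0 deficit_def by simp
qed

lemma deficit_nonneg: "0 \<le> deficit k"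
  unfolding deficit_def by (rule sum_nonneg) simp

lemma neg_part_b_Suc_le: "max (- b E (Suc k) i) 0 \<le> max (- b E k i) 0"
  using b_Suc_ge[of k i] by (auto simp: fires_def split: if_splits)

lemma deficit_decseq: "decseq deficit"
  unfolding deficit_def by (intro decseq_SucI sum_mono neg_part_b_Suc_le)

lemma deficit_Suc_le_if_feeds:
  assumes "feeds_deficient k"
  shows "deficit (Suc k) \<le> deficit k - gamma k"
proof -
  obtain i j where i: "i \<in> {1..N}" "b E k i < 0" and j: "j \<in> in_nbrs E i" "fires k j"
    using assms unfolding feeds_deficient_def by blast
  have "0 < card {j \<in> in_nbrs E i. fires k j}"
    using j finite_in_nbrs[of i] by (auto simp: card_gt_0_iff)
  then have "b E k i + gamma k \<le> b E (Suc k) i"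
    using b_Suc[of k i] not_fires_if_neg[OF i(2)] gamma_pos[of k] by simp
  with b_le_neg_gamma[OF i(2)]
  have "gamma k \<le> max (- b E k i) 0 - max (- b E (Suc k) i) 0"
    by simp
  also have "\<dots> \<le> (\<Sum>l\<in>{1..N}. max (- b E k l) 0 - max (- b E (Suc k) l) 0)"
    using i(1) neg_part_b_Suc_le by (intro member_le_sum) auto
  finally show ?thesis
    by (simp add: deficit_def sum_subtractf)
qed

lemma unbalanced_ex_fires:
  assumes "unbalanced k"
  shows "\<exists>u\<in>{1..N}. fires k u"
proof (rule ccontr)
  assume none: "\<not> ?thesis"
  have "max (b E k u) 0 < (real N - 1) * gamma k" if u: "u \<in> {1..N}" for u
  proof -
    have "b E k u < real (out_deg E u) * gamma k"
      using none u by (auto simp: fires_def not_le)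
    also have "\<dots> \<le> (real N - 1) * gamma k"
      using out_deg_le gamma_pos by (intro mult_right_mono) (simp_all add: less_imp_le)
    finally show ?thesis
      using two_le_N gamma_pos[of k] by simp
  qed
  then have "deficit k < (\<Sum>u\<in>{1..N}. (real N - 1) * gamma k)"
    unfolding deficit_eq_sum_pos_part using two_le_N by (intro sum_strict_mono) auto
  then show False
    using assms by (simp add: unbalanced_def eps_norm1_eq_deficit)
qed

lemma unbalanced_ex_neg:
  assumes "unbalanced k"
  shows "\<exists>w\<in>{1..N}. b E k w < 0"
proof (rule ccontr)
  assume "\<not> ?thesis"
  then have "deficit k = 0" unfolding deficit_def by (intro sum.neutral) auto
  moreover have "0 < 2 * real N * (real N - 1) * gamma k"
    using two_le_N gamma_pos[of k] by simp
  ultimately show False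
    using assms by (simp add: unbalanced_def eps_norm1_eq_deficit)
qed

definition stalled :: "nat \<Rightarrow> nat \<Rightarrow> real \<Rightarrow> bool" where
  "stalled a T g \<longleftrightarrow> (\<forall>t<T. gamma (a + t) = g \<and> unbalanced (a + t) \<and> \<not> feeds_deficient (a + t))"

definition firings :: "nat \<Rightarrow> nat \<Rightarrow> nat \<Rightarrow> nat" where
  "firings a T u = card {t \<in> {..<T}. fires (a + t) u}"

lemma b_frozen_if_neg:
  assumes "stalled a T g" "w \<in> {1..N}" "b E a w < 0" "t \<le> T"
  shows "b E (a + t) w = b E a w"
  using assms(4)
proof (induction t)
  case 0
  then show ?case by simp
next
  case (Suc t)
  then have IH: "b E (a + t) w = b E a w" by simp
  have "\<not> feeds_deficient (a + t)"
    using assms(1) Suc.prems by (simp add: stalled_def)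
  then have no_receipt: "{j \<in> in_nbrs E w. fires (a + t) j} = {}"
    using assms(2,3) IH by (auto simp: feeds_deficient_def)
  have "\<not> fires (a + t) w"
    using not_fires_if_neg assms(3) IH by simp
  then show ?case
    using b_Suc[of "a + t" w] IH by (simp add: no_receipt)
qed

lemma firings_le_successor:
  assumes const: "\<forall>t<T. gamma (a + t) = g" and uv: "(u, v) \<in> E" and v: "0 \<le> b E a v"
  shows "firings a T u + 1 \<le> (N + 1) * (firings a T v + 1)"
proof (cases "T = 0")
  case True
  then show ?thesis by (simp add: firings_def)
next
  case False
  define d where "d = real (out_deg E v)"
  have g: "0 < g"
    using gamma_pos const False by auto
  have u_in: "u \<in> in_nbrs E v"
    using uv by (simp add: in_nbrs_def)
  have step: "b E (a + t) v - (if d * g \<le> b E (a + t) v then d * g else 0)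
      + (if fires (a + t) u then g else 0) \<le> b E (a + Suc t) v" if "t < T" for t
  proof -
    have "(if fires (a + t) u then 1 else 0) \<le> card {j \<in> in_nbrs E v. fires (a + t) j}"
      using u_in finite_in_nbrs[of v] by (auto simp: Suc_le_eq card_gt_0_iff)
    then have "(if fires (a + t) u then g else 0) \<le> g * real (card {j \<in> in_nbrs E v. fires (a + t) j})"
      using g by (auto split: if_splits)
    then show ?thesis
      using b_Suc[of "a + t" v] const that by (simp add: d_def fires_def mult.commute)
  qed
  have "{t \<in> {..<T}. d * g \<le> b E (a + t) v} = {t \<in> {..<T}. fires (a + t) v}"
    using const by (auto simp: fires_def d_def)
  moreover have "real (card {t \<in> {..<T}. fires (a + t) u}) + 1
      \<le> (d + 2) * (real (card {t \<in> {..<T}. d * g \<le> b E (a + t) v}) + 1)"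
    by (rule card_raises_le_card_releases[where x = "\<lambda>t. b E (a + t) v"])
      (use g v step in \<open>simp_all add: d_def\<close>)
  ultimately have "real (firings a T u) + 1 \<le> (d + 2) * (real (firings a T v) + 1)"
    by (simp add: firings_def)
  also have "\<dots> \<le> (real N + 1) * (real (firings a T v) + 1)"
    using out_deg_le[of v] by (intro mult_right_mono) (simp_all add: d_def)
  finally have "real (firings a T u + 1) \<le> real ((N + 1) * (firings a T v + 1))"
    by (simp add: algebra_simps)
  then show ?thesis
    by (rule of_nat_le_iff[THEN iffD1])
qed

lemma firings_le_by_distance:
  assumes stalled: "stalled a T g" and w: "w \<in> {1..N}" "b E a w < 0"
  shows "(u, w) \<in> E ^^ n \<Longrightarrow> firings a T u + 1 \<le> (N + 1) ^ n"
proof (induction n arbitrary: u)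
  case 0
  then have "u = w" by simp
  have "\<not> fires (a + t) w" if "t < T" for t
    using b_frozen_if_neg[OF stalled w, of t] w that by (simp add: not_fires_if_neg)
  then show ?case unfolding \<open>u = w\<close> by (simp add: firings_def)
next
  case (Suc n)
  obtain v where uv: "(u, v) \<in> E" and vw: "(v, w) \<in> E ^^ n"
    using relpow_Suc_D2[OF Suc.prems] by blast
  have v: "v \<in> {1..N}" using uv E_subset by auto
  show ?case
  proof (cases "b E a v < 0")
    case True
    have "\<not> fires (a + t) u" if "t < T" for t
    proof
      assume "fires (a + t) u"
      moreover have "b E (a + t) v < 0"
        using b_frozen_if_neg[OF stalled v True, of t] True that by simp
      ultimately have "feeds_deficient (a + t)"
        using v uv by (auto simp: feeds_deficient_def in_nbrs_def)
      then show False using stalled that by (simp add: stalled_def)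
    qed
    then have "firings a T u = 0" by (auto simp: firings_def)
    then show ?thesis using one_le_power[of "N + 1" "Suc n"] by linarith
  next
    case False
    have "\<forall>t<T. gamma (a + t) = g" using stalled by (simp add: stalled_def)
    then have "firings a T u + 1 \<le> (N + 1) * (firings a T v + 1)"
      using uv False by (intro firings_le_successor[where g = g]) simp_all
    also have "\<dots> \<le> (N + 1) * (N + 1) ^ n"
      using Suc.IH[OF vw] by (rule mult_le_mono2)
    finally show ?thesis by simp
  qed
qed

lemma stalled_length_bounded: "\<exists>M. \<forall>a T g. stalled a T g \<longrightarrow> T \<le> M"
proof -
  have "\<forall>p\<in>{1..N} \<times> {1..N}. \<exists>n. p \<in> E ^^ n"
    using strongly_conn unfolding strongly_connected_def rtrancl_power by blast
  then obtain n0 where n0: "\<forall>p\<in>{1..N} \<times> {1..N}. \<exists>n\<le>n0. p \<in> E ^^ n"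
    using finite_ex_le_bound[of "{1..N} \<times> {1..N}" "\<lambda>p n. p \<in> E ^^ n"] by blast
  have "T \<le> N * (N + 1) ^ n0" if stalled: "stalled a T g" for a T g
  proof (cases "T = 0")
    case False
    then have "unbalanced (a + 0)"
      using stalled unfolding stalled_def by blast
    then have "unbalanced a" by simp
    then obtain w where w: "w \<in> {1..N}" "b E a w < 0"
      using unbalanced_ex_neg by blast
    have "firings a T u \<le> (N + 1) ^ n0" if u: "u \<in> {1..N}" for u
    proof -
      obtain n where "n \<le> n0" and path: "(u, w) \<in> E ^^ n"
        using n0 u w by blast
      have "firings a T u + 1 \<le> (N + 1) ^ n"
        by (rule firings_le_by_distance[OF stalled w path])
      also have "\<dots> \<le> (N + 1) ^ n0"
        using \<open>n \<le> n0\<close> by (simp add: power_increasing)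
      finally show ?thesis by simp
    qed
    moreover have "T \<le> (\<Sum>u\<in>{1..N}. firings a T u)"
      unfolding firings_def using stalled unbalanced_ex_fires
      by (intro le_sum_card_filter) (auto simp: stalled_def)
    ultimately show ?thesis
      using sum_bounded_above[of "{1..N}" "firings a T" "(N + 1) ^ n0"] by simp
  qed simp
  then show ?thesis by blast
qed

lemma deficit_drop_windows:
  assumes bound: "\<forall>a T g. stalled a T g \<longrightarrow> T \<le> M" and "M < L"
  shows "\<forall>t<q * L. gamma (c + t) = g \<and> unbalanced (c + t) \<Longrightarrow>
    deficit (c + q * L) \<le> deficit c - real q * g"
proof (induction q)
  case 0
  then show ?case by simp
next
  case (Suc q)
  let ?c = "c + q * L"
  have "\<forall>t<q * L. gamma (c + t) = g \<and> unbalanced (c + t)"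
    using Suc.prems by (simp add: trans_less_add2)
  then have IH: "deficit ?c \<le> deficit c - real q * g"
    by (rule Suc.IH)
  have window: "gamma (?c + t) = g \<and> unbalanced (?c + t)" if "t < L" for t
  proof -
    have "q * L + t < Suc q * L" using that by simp
    then show ?thesis using Suc.prems by (simp add: add.assoc)
  qed
  have "\<not> stalled ?c L g"
  proof
    assume "stalled ?c L g"
    with bound have "L \<le> M" by blast
    with \<open>M < L\<close> show False by simp
  qed
  with window obtain t where t: "t < L" "feeds_deficient (?c + t)"
    unfolding stalled_def by blast
  have "deficit (c + Suc q * L) \<le> deficit (Suc (?c + t))"
    by (rule decseqD[OF deficit_decseq]) (use t(1) in simp)
  also have "\<dots> \<le> deficit (?c + t) - g"
    using deficit_Suc_le_if_feeds[OF t(2)] window[OF t(1)] by simp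
  also have "\<dots> \<le> deficit ?c - g"
    using decseqD[OF deficit_decseq, of ?c "?c + t"] by simp
  finally show ?case
    using IH by (simp add: algebra_simps)
qed

lemma deficit_drop_block:
  assumes bound: "\<forall>a T g. stalled a T g \<longrightarrow> T \<le> M" and "M < 2 ^ m" and "m \<le> n"
    and unbal: "\<forall>t<2 ^ n. unbalanced (2 ^ n - 1 + t)"
  shows "deficit (2 ^ Suc n - 1) \<le> deficit (2 ^ n - 1) - 1 / 2 ^ m"
proof -
  have split: "(2::nat) ^ (n - m) * 2 ^ m = 2 ^ n"
    using \<open>m \<le> n\<close> by (simp flip: power_add)
  have pos: "(1::nat) \<le> 2 ^ n" by simp
  have "\<forall>t<2 ^ (n - m) * 2 ^ m. gamma (2 ^ n - 1 + t) = 1 / 2 ^ n \<and> unbalanced (2 ^ n - 1 + t)"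
    unfolding split using unbal pos by (auto intro!: gamma_eqI)
  from deficit_drop_windows[OF bound \<open>M < 2 ^ m\<close> this]
  have "deficit (2 ^ n - 1 + 2 ^ (n - m) * 2 ^ m) \<le> deficit (2 ^ n - 1) - 2 ^ (n - m) / 2 ^ n"
    by simp
  moreover have "(2::real) ^ (n - m) / 2 ^ n = 1 / 2 ^ m"
    using \<open>m \<le> n\<close> by (simp add: field_simps flip: power_add)
  ultimately show ?thesis
    unfolding split using pos by (simp add: mult_2)
qed

lemma ex_error_below_threshold:
  "\<exists>k1\<ge>k. eps_norm1 N E k1 < 2 * real N * (real N - 1) * gamma k1"
proof (rule ccontr)
  assume "\<not> ?thesis"
  then have unbal: "\<forall>s\<ge>k. unbalanced s"
    by (auto simp: unbalanced_def not_less)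
  obtain M where bound: "\<forall>a T g. stalled a T g \<longrightarrow> T \<le> M"
    using stalled_length_bounded by blast
  define n0 where "n0 = M + k"
  have drop: "deficit (2 ^ (n0 + j) - 1) \<le> deficit (2 ^ n0 - 1) - real j / 2 ^ M" for j
  proof (induction j)
    case (Suc j)
    have "k \<le> 2 ^ (n0 + j) - 1"
      using less_exp[of "n0 + j"] unfolding n0_def by linarith
    then have "\<forall>t<2 ^ (n0 + j). unbalanced (2 ^ (n0 + j) - 1 + t)"
      using unbal by (simp add: trans_le_add1)
    then have "deficit (2 ^ Suc (n0 + j) - 1) \<le> deficit (2 ^ (n0 + j) - 1) - 1 / 2 ^ M"
      by (intro deficit_drop_block[OF bound less_exp]) (simp add: n0_def)
    with Suc.IH show ?case
      by (simp add: add_divide_distrib)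
  qed simp
  obtain j :: nat where "deficit (2 ^ n0 - 1) * 2 ^ M < real j"
    using reals_Archimedean2 by blast
  then have "deficit (2 ^ n0 - 1) < real j / 2 ^ M"
    by (simp add: field_simps)
  with drop[of j] deficit_nonneg[of "2 ^ (n0 + j) - 1"] show False
    by linarith
qed

end

theorem lemma6:
  fixes N :: nat and E :: "(nat \<times> nat) set"
  assumes "N \<ge> 2"
    and "E \<subseteq> {1..N} \<times> {1..N}"
    and "\<forall>i. (i, i) \<notin> E"
    and "strongly_connected N E"
  shows "\<forall>k. \<exists>k1\<ge>k. eps_norm1 N E k1 < 2 * real N * (real N - 1) * gamma k1"
proof -
  interpret weight_balancing N E
    using assms by unfold_locales
  show ?thesis
    using ex_error_below_threshold by blast
qed

end
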